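(* Let $1<p<\infty$ and let $w:\mathbb N_0\to(0,\infty)$ satisfy $w(n_1)\le w(n_2)$ for $n_1<n_2$ and $\lim_{n\to\infty}w(n)=\infty$. Suppose there is a non-negative, decreasing $f\in C^1[0,\infty)$ with $f(0)=1$ and constants $\tau_0>0$, $C_w>0$ such that $$\sum_{n\in\mathbb N_0}w(n)f(\tau w(n))\le C_w\tau^{-1}\quad\forall\tau\in(0,\tau_0].$$ Set $X=\ell^p(w)$, $V=\ell^1$, $U=\ell^\infty(w)$, $a=\frac1{p-1}$, $X_s=\ell^{p_s}(w)$ with $p_s=\frac{p}{1+s(p-1)}$ for $s\in[0,1]$, $t_0=\tau_0^{1/(1+a)}$, and $(P_tx)(n)=f(t^{a+1}w(n))x(n)$ for $x\in\ell^p(w)$, $t\in(0,t_0]$. Then: (i) the embeddings $V\hookrightarrow X\hookrightarrow U$ are continuous; (ii) $X_0=X$, $X_1=V$, and $X_s\hookrightarrow X_t$ continuously for $0\le t\le s\le1$; (iii) for all $s\in(0,1]$ and $r\in[0,s)$ there is $L>0$ with $\|x\|_{X_r}\le L\|x\|_{X_s}^{\frac{r+a}{a+s}}\|x\|_U^{\frac{s-r}{a+s}}$ for all $x\in X_s$; (iv) for all $s\in[0,1]$ and $t\in(0,t_0]$, $P_tX_s\subset X_s$ and $C_P:=\sup_{0<t\le t_0}\|P_t\|_{X_s\to X_s}<\infty$, and for each $x\in X$ the map $t\mapsto P_tx$ is continuous from $(0,t_0]$ into $X$; (v) for every $0<s<1$ there is $C_{Proj}\ge C_P+1$ such that for all $0<t\le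 t_0$, $\|P_t-\mathrm{id}\|_{X_s\to U}\le C_{Proj}t^{a+s}$ and $\|P_t\|_{X_s\to V}\le C_{Proj}t^{s-1}$.
   Context: For $w:\mathbb N_0\to(0,\infty)$ and $1\le p<\infty$, $\ell^p(w)$ is the space of sequences $x=\{x(n)\}_{n\ge0}$ with $\|x\|_{\ell^p(w)}=\big(\sum_{n\in\mathbb N_0}w(n)^{1-p}|x(n)|^p\big)^{1/p}<\infty$ (so $\ell^1(w)=\ell^1$), and $\ell^\infty(w)$ is the space of sequences with $\|x\|_{\ell^\infty(w)}=\sup_{n}|w(n)^{-1}x(n)|<\infty$. *)

theory Defs
  imports "HOL-Analysis.Analysis"
begin

definition lpw_space :: "real \<Rightarrow> (nat \<Rightarrow> real) \<Rightarrow> (nat \<Rightarrow> real) set" where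
  "lpw_space p w = {x. summable (\<lambda>n. w n powr (1 - p) * \<bar>x n\<bar> powr p)}"

definition lpw_norm :: "real \<Rightarrow> (nat \<Rightarrow> real) \<Rightarrow> (nat \<Rightarrow> real) \<Rightarrow> real" where
  "lpw_norm p w x = (\<Sum>n. w n powr (1 - p) * \<bar>x n\<bar> powr p) powr (1 / p)"

definition linfw_space :: "(nat \<Rightarrow> real) \<Rightarrow> (nat \<Rightarrow> real) set" where
  "linfw_space w = {x. bdd_above (range (\<lambda>n. \<bar>x n\<bar> / w n))}"

definition linfw_norm :: "(nat \<Rightarrow> real) \<Rightarrow> (nat \<Rightarrow> real) \<Rightarrow> real" where
  "linfw_norm w x = (SUP n. \<bar>x n\<bar> / w n)"

definition cont_embed ::
  "'a set \<Rightarrow> ('a \<Rightarrow> real) \<Rightarrow> 'a set \<Rightarrow> ('a \<Rightarrow> real) \<Rightarrow> bool" where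
  "cont_embed D1 N1 D2 N2 \<longleftrightarrow> D1 \<subseteq> D2 \<and> (\<exists>C. \<forall>x\<in>D1. N2 x \<le> C * N1 x)"

definition op_norm ::
  "'a set \<Rightarrow> ('a \<Rightarrow> real) \<Rightarrow> ('b \<Rightarrow> real) \<Rightarrow> ('a \<Rightarrow> 'b) \<Rightarrow> ereal" where
  "op_norm D1 N1 N2 T = (SUP x\<in>{x\<in>D1. N1 x \<le> 1}. ereal (N2 (T x)))"

definition C1_nonneg_halfline :: "(real \<Rightarrow> real) \<Rightarrow> bool" where
  "C1_nonneg_halfline f \<longleftrightarrow> (\<exists>f'. (\<forall>x\<ge>0. (f has_real_derivative f' x) (at x within {0..}))
                                   \<and> continuous_on {0..} f')"

end

theory Submission
  imports Defs
begin

text \<open>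
  A sequence x in l^q(w) satisfies |x n| / w n \<le> \<parallel>x\<parallel>_q * w n powr (-1/q), so l^q(w) embeds
  into l^\<infinity>(w) because w is bounded below by w 0, and interpolating between l^q1(w) and
  l^\<infinity>(w) yields both the embeddings X_s \<subseteq> X_t and (iii) with L = 1.
  The operators P_t multiply by f(t^(a+1) w n) \<in> [0,1]; hence they are contractions on every
  l^q(w) and depend continuously on t by dominated convergence. For (v) put \<tau> = t^(a+1) and
  q = p_s. Since f(0) = 1 and f is differentiable at 0, 1 - f u \<le> K u, so
  |(P_t x - x) n| / w n \<le> min 1 (K \<tau> w n) * \<parallel>x\<parallel>_q * w n powr (-1/q) \<le> (K \<tau>)^(1/q) \<parallel>x\<parallel>_q;
  and Young's inequality together with \<Sum> w n f(\<tau> w n) \<le> C_w / \<tau> bounds \<parallel>P_t x\<parallel>_1 by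
  2 (C_w / \<tau>)^(1 - 1/q) on the unit ball of l^q(w). As (a+1)/p_s = a + s, these are the powers
  t^(a+s) and t^(s-1).
\<close>

section \<open>Weighted sequence spaces\<close>

lemma lpw_norm_nonneg: "0 \<le> lpw_norm q w x"
  by (simp add: lpw_norm_def)

lemma lpw_spaceD: "x \<in> lpw_space q w \<Longrightarrow> summable (\<lambda>n. w n powr (1 - q) * \<bar>x n\<bar> powr q)"
  by (simp add: lpw_space_def)

lemma lpw_norm_powr:
  assumes "0 < q" and "x \<in> lpw_space q w"
  shows "lpw_norm q w x powr q = (\<Sum>n. w n powr (1 - q) * \<bar>x n\<bar> powr q)"
  using assms by (simp add: lpw_norm_def lpw_space_def powr_powr suminf_nonneg)

lemma lpw_summand_eq:
  fixes v y q :: real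
  assumes "0 < v" shows "v powr (1 - q) * \<bar>y\<bar> powr q = v * (\<bar>y\<bar> / v) powr q"
  using assms by (simp add: powr_divide powr_diff)

lemma lpw_pointwise_bound:
  assumes w: "0 < w n" and q: "0 < q" and x: "x \<in> lpw_space q w"
  shows "\<bar>x n\<bar> / w n \<le> lpw_norm q w x * w n powr (-1 / q)"
proof -
  have "w n * (\<bar>x n\<bar> / w n) powr q \<le> lpw_norm q w x powr q"
    using sum_le_suminf[OF lpw_spaceD[OF x], of "{n}"] lpw_summand_eq[OF w]
    by (simp add: lpw_norm_powr[OF q x])
  then have "(\<bar>x n\<bar> / w n) powr q \<le> lpw_norm q w x powr q / w n"
    using w by (simp add: field_simps)
  then have "((\<bar>x n\<bar> / w n) powr q) powr (1 / q) \<le> (lpw_norm q w x powr q / w n) powr (1 / q)"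
    using q by (intro powr_mono2) auto
  then show ?thesis
    using q w by (simp add: powr_powr powr_divide lpw_norm_nonneg powr_minus_divide)
qed

lemma linfw_space_norm_le:
  assumes "\<And>n. \<bar>x n\<bar> / w n \<le> C"
  shows "x \<in> linfw_space w" and "linfw_norm w x \<le> C"
  using assms by (auto simp: linfw_space_def linfw_norm_def intro!: bdd_aboveI2 cSUP_least)

lemma linfw_norm_upper: "x \<in> linfw_space w \<Longrightarrow> \<bar>x n\<bar> / w n \<le> linfw_norm w x"
  unfolding linfw_norm_def linfw_space_def by (auto intro: cSUP_upper)

lemma lpw_le_linfw:
  assumes w_pos: "\<And>n. 0 < w n" and c: "0 < c" "\<And>n. c \<le> w n"
    and q: "0 < q" and x: "x \<in> lpw_space q w"
  shows "x \<in> linfw_space w" and "linfw_norm w x \<le> c powr (-1 / q) * lpw_norm q w x"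
proof -
  have "\<bar>x n\<bar> / w n \<le> c powr (-1 / q) * lpw_norm q w x" for n
  proof -
    have "\<bar>x n\<bar> / w n \<le> lpw_norm q w x * w n powr (-1 / q)"
      by (rule lpw_pointwise_bound[OF w_pos q x])
    also have "\<dots> \<le> lpw_norm q w x * c powr (-1 / q)"
      using q c by (intro mult_left_mono powr_mono2' lpw_norm_nonneg) auto
    finally show ?thesis by (simp add: mult.commute)
  qed
  then show "x \<in> linfw_space w" "linfw_norm w x \<le> c powr (-1 / q) * lpw_norm q w x"
    by (rule linfw_space_norm_le)+
qed

lemma cont_embed_lpw_linfw:
  assumes "\<And>n. 0 < w n" and "0 < c" "\<And>n. c \<le> w n" and "0 < q"
  shows "cont_embed (lpw_space q w) (lpw_norm q w) (linfw_space w) (linfw_norm w)"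
  unfolding cont_embed_def using lpw_le_linfw[where w=w, OF assms] by blast

lemma lpw_interpolation:
  fixes q1 q2 M :: real
  assumes w_pos: "\<And>n. 0 < w n" and q: "0 < q1" "q1 < q2" and x: "x \<in> lpw_space q1 w"
    and M: "\<And>n. \<bar>x n\<bar> / w n \<le> M"
  shows "x \<in> lpw_space q2 w"
    and "lpw_norm q2 w x \<le> M powr (1 - q1 / q2) * lpw_norm q1 w x powr (q1 / q2)"
proof -
  have M0: "0 \<le> M"
    using M[of 0] w_pos[of 0] by (meson abs_ge_zero divide_nonneg_pos order_trans)
  have summand_le: "w n powr (1 - q2) * \<bar>x n\<bar> powr q2
      \<le> M powr (q2 - q1) * (w n powr (1 - q1) * \<bar>x n\<bar> powr q1)" for n
  proof -
    have "(\<bar>x n\<bar> / w n) powr q2 = (\<bar>x n\<bar> / w n) powr q1 * (\<bar>x n\<bar> / w n) powr (q2 - q1)"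
      by (simp flip: powr_add)
    also have "\<dots> \<le> (\<bar>x n\<bar> / w n) powr q1 * M powr (q2 - q1)"
      using M[of n] q w_pos[of n] by (intro mult_left_mono powr_mono2) auto
    finally show ?thesis
      using w_pos[of n] lpw_summand_eq[of "w n" q1] lpw_summand_eq[of "w n" q2]
      by (simp add: algebra_simps mult_left_mono)
  qed
  have sum1: "summable (\<lambda>n. w n powr (1 - q1) * \<bar>x n\<bar> powr q1)"
    using x by (rule lpw_spaceD)
  have sum2: "summable (\<lambda>n. w n powr (1 - q2) * \<bar>x n\<bar> powr q2)"
    by (rule summable_comparison_test[OF _ summable_mult[OF sum1]]) (use summand_le in auto)
  then show x2: "x \<in> lpw_space q2 w"
    by (simp add: lpw_space_def)
  have "lpw_norm q2 w x powr q2 \<le> M powr (q2 - q1) * lpw_norm q1 w x powr q1"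
    using q x x2 summand_le
    by (simp add: lpw_norm_powr suminf_le sum1 sum2 flip: suminf_mult)
  then have "(lpw_norm q2 w x powr q2) powr (1 / q2)
      \<le> (M powr (q2 - q1) * lpw_norm q1 w x powr q1) powr (1 / q2)"
    using q by (intro powr_mono2) auto
  also have "\<dots> = M powr ((q2 - q1) / q2) * lpw_norm q1 w x powr (q1 / q2)"
    using M0 by (simp add: powr_mult powr_powr lpw_norm_nonneg)
  finally show "lpw_norm q2 w x \<le> M powr (1 - q1 / q2) * lpw_norm q1 w x powr (q1 / q2)"
    using q by (simp add: powr_powr lpw_norm_nonneg diff_divide_distrib)
qed

lemma cont_embed_lpw_lpw:
  fixes q1 q2 :: real
  assumes w_pos: "\<And>n. 0 < w n" and c: "0 < c" "\<And>n. c \<le> w n" and q: "0 < q1" "q1 \<le> q2"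
  shows "cont_embed (lpw_space q1 w) (lpw_norm q1 w) (lpw_space q2 w) (lpw_norm q2 w)"
proof (cases "q1 = q2")
  case True
  then show ?thesis
    unfolding cont_embed_def by (intro conjI exI[of _ 1]) auto
next
  case False
  with q have q_less: "q1 < q2" by simp
  define \<theta> where "\<theta> = q1 / q2"
  have "x \<in> lpw_space q2 w \<and> lpw_norm q2 w x \<le> (c powr (-1 / q1)) powr (1 - \<theta>) * lpw_norm q1 w x"
    if x: "x \<in> lpw_space q1 w" for x
  proof -
    let ?M = "c powr (-1 / q1) * lpw_norm q1 w x"
    have M: "\<bar>x n\<bar> / w n \<le> ?M" for n
      using lpw_le_linfw(2)[OF w_pos c q(1) x]
        linfw_norm_upper[OF lpw_le_linfw(1)[OF w_pos c q(1) x]]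
      by (rule order_trans[rotated])
    have "lpw_norm q2 w x \<le> ?M powr (1 - \<theta>) * lpw_norm q1 w x powr \<theta>"
      unfolding \<theta>_def by (rule lpw_interpolation(2)[OF w_pos q(1) q_less x M])
    also have "\<dots> = (c powr (-1 / q1)) powr (1 - \<theta>) * lpw_norm q1 w x"
      by (simp add: powr_mult lpw_norm_nonneg mult.assoc flip: powr_add)
    finally show ?thesis
      using lpw_interpolation(1)[OF w_pos q(1) q_less x M] by simp
  qed
  then show ?thesis
    unfolding cont_embed_def by blast
qed

lemma lpw_1_space: "(\<And>n. 0 < w n) \<Longrightarrow> lpw_space 1 w = {x. summable (\<lambda>n. \<bar>x n\<bar>)}"
  by (simp add: lpw_space_def less_imp_neq[symmetric])

lemma lpw_1_norm: "(\<And>n. 0 < w n) \<Longrightarrow> lpw_norm 1 w x = \<bar>\<Sum>n. \<bar>x n\<bar>\<bar>"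
  by (simp add: lpw_norm_def less_imp_neq[symmetric] powr_one')

section \<open>Diagonal multipliers\<close>

lemma op_norm_le:
  assumes "\<And>x. x \<in> D \<Longrightarrow> N1 x \<le> 1 \<Longrightarrow> N2 (T x) \<le> C"
  shows "op_norm D N1 N2 T \<le> ereal C"
  unfolding op_norm_def using assms by (auto intro: SUP_least)

lemma lpw_multiplier_contraction:
  fixes m :: "nat \<Rightarrow> real" and q :: real
  assumes q: "0 < q" and x: "x \<in> lpw_space q w" and m: "\<And>n. \<bar>m n\<bar> \<le> 1"
  shows "(\<lambda>n. m n * x n) \<in> lpw_space q w"
    and "lpw_norm q w (\<lambda>n. m n * x n) \<le> lpw_norm q w x"
proof -
  have summand_le: "w n powr (1 - q) * \<bar>m n * x n\<bar> powr q \<le> w n powr (1 - q) * \<bar>x n\<bar> powr q"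
    for n
    using q m[of n] by (intro mult_left_mono powr_mono2) (auto simp: abs_mult mult_left_le_one_le)
  have sum: "summable (\<lambda>n. w n powr (1 - q) * \<bar>m n * x n\<bar> powr q)"
    by (rule summable_comparison_test[OF _ lpw_spaceD[OF x]]) (use summand_le in auto)
  then show "(\<lambda>n. m n * x n) \<in> lpw_space q w"
    by (simp add: lpw_space_def)
  show "lpw_norm q w (\<lambda>n. m n * x n) \<le> lpw_norm q w x"
    unfolding lpw_norm_def using q sum lpw_spaceD[OF x] summand_le
    by (intro powr_mono2 suminf_le) (auto intro!: suminf_nonneg)
qed

lemma lpw_multiplier_family_op_norm_le_1:
  fixes m :: "real \<Rightarrow> nat \<Rightarrow> real" and q :: real and T :: "real set"
  assumes q: "0 < q" and m: "\<And>t n. \<bar>m t n\<bar> \<le> 1"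
  shows "(SUP t\<in>T. op_norm (lpw_space q w) (lpw_norm q w) (lpw_norm q w) (\<lambda>x n. m t n * x n)) \<le> 1"
proof -
  have "op_norm (lpw_space q w) (lpw_norm q w) (lpw_norm q w) (\<lambda>x n. m t n * x n) \<le> 1" for t
    unfolding one_ereal_def using lpw_multiplier_contraction(2)[where m = "m t", OF q _ m]
    by (intro op_norm_le) force
  then show ?thesis
    by (simp add: SUP_least)
qed

lemma lpw_multiplier_family_continuous:
  fixes m :: "real \<Rightarrow> nat \<Rightarrow> real" and q :: real and A :: "real set"
  assumes q: "0 < q" and x: "x \<in> lpw_space q w" and m: "\<And>t n. t \<in> A \<Longrightarrow> \<bar>m t n\<bar> \<le> 1"
    and m_cont: "\<And>n. continuous_on A (\<lambda>t. m t n)" and t': "t' \<in> A"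
  shows "((\<lambda>t. lpw_norm q w (\<lambda>n. m t n * x n - m t' n * x n)) \<longlongrightarrow> 0) (at t' within A)"
proof -
  define g where "g n t = w n powr (1 - q) * \<bar>m t n * x n - m t' n * x n\<bar> powr q" for n t
  have g_bound: "norm (g n t) \<le> 2 powr q * (w n powr (1 - q) * \<bar>x n\<bar> powr q)" if "t \<in> A" for n t
  proof -
    have "\<bar>m t n * x n - m t' n * x n\<bar> \<le> 2 * \<bar>x n\<bar>"
      using m[OF that, of n] m[OF t', of n]
      by (simp add: abs_mult flip: left_diff_distrib) (intro mult_right_mono; auto)
    then have "\<bar>m t n * x n - m t' n * x n\<bar> powr q \<le> (2 * \<bar>x n\<bar>) powr q"
      using q by (intro powr_mono2) auto
    from mult_left_mono[OF this, of "w n powr (1 - q)"] show ?thesis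
      unfolding g_def by (simp add: powr_mult mult_ac)
  qed
  have g_cont: "continuous_on A (g n)" for n
    unfolding g_def using q
    by (intro continuous_on_mult_left continuous_on_powr' continuous_intros m_cont) auto
  have "uniform_limit A (\<lambda>N t. \<Sum>n<N. g n t) (\<lambda>t. \<Sum>n. g n t) sequentially"
    by (rule Weierstrass_m_test[OF g_bound summable_mult[OF lpw_spaceD[OF x]]])
  then have "continuous_on A (\<lambda>t. \<Sum>n. g n t)"
    by (rule uniform_limit_theorem[rotated]) (auto intro!: always_eventually continuous_on_sum g_cont)
  then have "((\<lambda>t. \<Sum>n. g n t) \<longlongrightarrow> (\<Sum>n. g n t')) (at t' within A)"
    using t' by (simp add: continuous_on_def)
  then have "((\<lambda>t. \<Sum>n. g n t) \<longlongrightarrow> 0) (at t' within A)"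
    by (simp add: g_def)
  moreover have "0 \<le> (\<Sum>n. g n t)" if "t \<in> A" for t
  proof (rule suminf_nonneg)
    show "summable (\<lambda>n. g n t)"
      by (rule summable_comparison_test[OF _ summable_mult[OF lpw_spaceD[OF x]]])
        (use g_bound[OF that] in auto)
  qed (simp add: g_def)
  then have "\<forall>\<^sub>F t in at t' within A. 0 \<le> (\<Sum>n. g n t)"
    by (auto simp: eventually_at_filter)
  ultimately have "((\<lambda>t. (\<Sum>n. g n t) powr (1 / q)) \<longlongrightarrow> 0) (at t' within A)"
    using q by (intro tendsto_zero_powrI[where b = "1 / q"] tendsto_const) auto
  then show ?thesis
    by (simp add: lpw_norm_def g_def)
qed

lemma weighted_young_bound:
  fixes q v \<phi> y B :: real
  assumes q: "1 < q" and v: "0 < v" and \<phi>: "0 \<le> \<phi>" "\<phi> \<le> 1" and B: "0 < B"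
  shows "\<bar>\<phi> * y\<bar> \<le> B powr (1 - 1 / q) * (v powr (1 - q) * \<bar>y\<bar> powr q + v * \<phi> / B)"
proof -
  define A where "A = B powr (1 - 1 / q)"
  define q' where "q' = q / (q - 1)"
  have A: "0 < A" using B by (simp add: A_def)
  have q': "1 < q'" "1 / q + 1 / q' = 1"
    using q by (simp_all add: q'_def field_simps)
  have A_q': "A powr q' = B"
    using q B by (simp add: A_def q'_def powr_powr field_simps)
  have "(\<bar>y\<bar> / v) * (\<phi> / A) \<le> (\<bar>y\<bar> / v) powr q / q + (\<phi> / A) powr q' / q'"
    using q q' v \<phi> A by (intro Youngs_inequality) auto
  also have "\<dots> \<le> (\<bar>y\<bar> / v) powr q + (\<phi> / A) powr q'"
    using q q' by (intro add_mono) (auto simp: divide_le_eq mult_le_cancel_left1)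
  also have "(\<phi> / A) powr q' \<le> \<phi> / B"
    using \<phi> q' A_q' powr_le_one_le[of \<phi> q'] B
    by (cases "\<phi> = 0") (auto simp: powr_divide divide_right_mono)
  finally have "(\<bar>y\<bar> / v) * (\<phi> / A) \<le> (\<bar>y\<bar> / v) powr q + \<phi> / B"
    by simp
  from mult_left_mono[OF this, of "v * A"] show ?thesis
    using v A \<phi> lpw_summand_eq[OF v, of q y] by (simp add: A_def abs_mult field_simps)
qed

lemma lpw_multiplier_into_l1:
  fixes m :: "nat \<Rightarrow> real" and q B :: real
  assumes w_pos: "\<And>n. 0 < w n" and q: "1 < q" and x: "x \<in> lpw_space q w"
    and m: "\<And>n. 0 \<le> m n" "\<And>n. m n \<le> 1"
    and m_sum: "summable (\<lambda>n. w n * m n)" "(\<Sum>n. w n * m n) \<le> B" and B: "0 < B"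
  shows "(\<lambda>n. m n * x n) \<in> lpw_space 1 w"
    and "lpw_norm 1 w (\<lambda>n. m n * x n) \<le> B powr (1 - 1 / q) * (lpw_norm q w x powr q + 1)"
proof -
  define R
    where "R n = B powr (1 - 1 / q) * (w n powr (1 - q) * \<bar>x n\<bar> powr q + w n * m n / B)" for n
  have summand_le: "\<bar>m n * x n\<bar> \<le> R n" for n
    unfolding R_def using q w_pos m B by (intro weighted_young_bound) auto
  have x_sums: "(\<lambda>n. w n powr (1 - q) * \<bar>x n\<bar> powr q) sums (lpw_norm q w x powr q)"
    using q by (simp add: lpw_norm_powr[OF _ x] summable_sums lpw_spaceD[OF x])
  have "R sums (B powr (1 - 1 / q) * (lpw_norm q w x powr q + (\<Sum>n. w n * m n) / B))"
    unfolding R_def by (intro sums_mult sums_add sums_divide x_sums summable_sums m_sum)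
  then have R_sum: "summable R"
    and R_le: "suminf R \<le> B powr (1 - 1 / q) * (lpw_norm q w x powr q + 1)"
    using m_sum B by (auto simp: sums_iff intro!: mult_left_mono)
  have sum: "summable (\<lambda>n. \<bar>m n * x n\<bar>)"
    by (rule summable_comparison_test[OF _ R_sum]) (use summand_le in auto)
  then show "(\<lambda>n. m n * x n) \<in> lpw_space 1 w"
    by (simp add: lpw_1_space[OF w_pos])
  have "(\<Sum>n. \<bar>m n * x n\<bar>) \<le> suminf R"
    by (intro suminf_le sum R_sum summand_le)
  then show "lpw_norm 1 w (\<lambda>n. m n * x n) \<le> B powr (1 - 1 / q) * (lpw_norm q w x powr q + 1)"
    using R_le sum by (simp add: lpw_1_norm[OF w_pos] suminf_nonneg)
qed

lemma min_one_le_powr: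
  fixes z \<theta> :: real
  assumes "0 \<le> z" "0 < \<theta>" "\<theta> \<le> 1"
  shows "min 1 z \<le> z powr \<theta>"
proof (cases "z \<le> 1")
  case True
  then have "z powr 1 \<le> z powr \<theta>"
    using assms by (intro powr_mono') auto
  with assms show ?thesis by simp
next
  case False
  with assms show ?thesis using ge_one_powr_ge_zero[of z \<theta>] by simp
qed

lemma linfw_multiplier_defect:
  fixes m :: "nat \<Rightarrow> real" and q \<kappa> :: real
  assumes w_pos: "\<And>n. 0 < w n" and q: "1 \<le> q" and x: "x \<in> lpw_space q w" and \<kappa>: "0 \<le> \<kappa>"
    and m: "\<And>n. \<bar>1 - m n\<bar> \<le> 1" "\<And>n. \<bar>1 - m n\<bar> \<le> \<kappa> * w n"
  shows "(\<lambda>n. m n * x n - x n) \<in> linfw_space w"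
    and "linfw_norm w (\<lambda>n. m n * x n - x n) \<le> \<kappa> powr (1 / q) * lpw_norm q w x"
proof -
  have "\<bar>m n * x n - x n\<bar> / w n \<le> \<kappa> powr (1 / q) * lpw_norm q w x" for n
  proof -
    have "m n * x n - x n = (m n - 1) * x n"
      by (simp add: algebra_simps)
    then have "\<bar>m n * x n - x n\<bar> / w n = \<bar>1 - m n\<bar> * (\<bar>x n\<bar> / w n)"
      by (simp add: abs_mult abs_minus_commute)
    also have "\<dots> \<le> min 1 (\<kappa> * w n) * (lpw_norm q w x * w n powr (-1 / q))"
      using m w_pos[of n] q \<kappa>
      by (intro mult_mono lpw_pointwise_bound[OF w_pos _ x]) auto
    also have "\<dots> \<le> (\<kappa> * w n) powr (1 / q) * (lpw_norm q w x * w n powr (-1 / q))"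
      using q \<kappa> w_pos[of n]
      by (intro mult_right_mono min_one_le_powr) (auto simp: lpw_norm_nonneg)
    also have "\<dots> = \<kappa> powr (1 / q) * lpw_norm q w x * (w n powr (1 / q) * w n powr (-1 / q))"
      using \<kappa> w_pos[of n] by (simp add: powr_mult)
    also have "w n powr (1 / q) * w n powr (-1 / q) = 1"
      using w_pos[of n] by (simp flip: powr_add)
    finally show ?thesis by simp
  qed
  then show "(\<lambda>n. m n * x n - x n) \<in> linfw_space w"
    and "linfw_norm w (\<lambda>n. m n * x n - x n) \<le> \<kappa> powr (1 / q) * lpw_norm q w x"
    by (rule linfw_space_norm_le)+
qed

lemma lpw_multiplier_approximation_bounds:
  fixes m :: "nat \<Rightarrow> real" and q \<kappa> B :: real
  assumes w_pos: "\<And>n. 0 < w n" and q: "1 < q"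
    and m: "\<And>n. 0 \<le> m n" "\<And>n. m n \<le> 1" "\<And>n. 1 - m n \<le> \<kappa> * w n" and \<kappa>: "0 \<le> \<kappa>"
    and m_sum: "summable (\<lambda>n. w n * m n)" "(\<Sum>n. w n * m n) \<le> B" and B: "0 < B"
  shows "\<forall>x\<in>lpw_space q w. (\<lambda>n. m n * x n - x n) \<in> linfw_space w \<and> (\<lambda>n. m n * x n) \<in> lpw_space 1 w"
    and "op_norm (lpw_space q w) (lpw_norm q w) (linfw_norm w) (\<lambda>x n. m n * x n - x n)
           \<le> ereal (\<kappa> powr (1 / q))"
    and "op_norm (lpw_space q w) (lpw_norm q w) (lpw_norm 1 w) (\<lambda>x n. m n * x n)
           \<le> ereal (2 * B powr (1 - 1 / q))"
proof -
  have defect: "\<bar>1 - m n\<bar> \<le> 1" "\<bar>1 - m n\<bar> \<le> \<kappa> * w n" for n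
    using m[of n] by auto
  note linfw =
    linfw_multiplier_defect[where w = w and m = m, OF w_pos less_imp_le[OF q] _ \<kappa> defect]
  note l1 = lpw_multiplier_into_l1[where w = w and m = m, OF w_pos q _ m(1,2) m_sum B]
  show "\<forall>x\<in>lpw_space q w. (\<lambda>n. m n * x n - x n) \<in> linfw_space w \<and> (\<lambda>n. m n * x n) \<in> lpw_space 1 w"
    using linfw(1) l1(1) by simp
  show "op_norm (lpw_space q w) (lpw_norm q w) (linfw_norm w) (\<lambda>x n. m n * x n - x n)
      \<le> ereal (\<kappa> powr (1 / q))"
  proof (rule op_norm_le)
    fix x assume x: "x \<in> lpw_space q w" and "lpw_norm q w x \<le> 1"
    then have "\<kappa> powr (1 / q) * lpw_norm q w x \<le> \<kappa> powr (1 / q)"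
      by (simp add: mult_left_le)
    with linfw(2)[OF x] show "linfw_norm w (\<lambda>n. m n * x n - x n) \<le> \<kappa> powr (1 / q)"
      by simp
  qed
  show "op_norm (lpw_space q w) (lpw_norm q w) (lpw_norm 1 w) (\<lambda>x n. m n * x n)
      \<le> ereal (2 * B powr (1 - 1 / q))"
  proof (rule op_norm_le)
    fix x assume x: "x \<in> lpw_space q w" and "lpw_norm q w x \<le> 1"
    then have "lpw_norm q w x powr q \<le> 1 powr q"
      using q by (intro powr_mono2 lpw_norm_nonneg) auto
    then have "B powr (1 - 1 / q) * (lpw_norm q w x powr q + 1) \<le> B powr (1 - 1 / q) * 2"
      by (intro mult_left_mono) auto
    with l1(2)[OF x] show "lpw_norm 1 w (\<lambda>n. m n * x n) \<le> 2 * B powr (1 - 1 / q)"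
      by simp
  qed
qed

section \<open>The interpolation scale\<close>

definition interp_exponent :: "real \<Rightarrow> real \<Rightarrow> real" where
  "interp_exponent p s = p / (1 + s * (p - 1))"

lemma interp_exponent_0 [simp]: "interp_exponent p 0 = p"
  by (simp add: interp_exponent_def)

lemma interp_exponent_1: "1 < p \<Longrightarrow> interp_exponent p 1 = 1"
  by (simp add: interp_exponent_def)

lemma interp_exponent_strict_antimono:
  assumes "1 < p" "0 \<le> r" "r < s"
  shows "interp_exponent p s < interp_exponent p r"
proof -
  have "0 \<le> r * (p - 1)" and less: "r * (p - 1) < s * (p - 1)"
    using assms by simp_all
  then have "0 < 1 + r * (p - 1)" "0 < 1 + s * (p - 1)"
    by linarith+
  with less show ?thesis
    unfolding interp_exponent_def using assms
    by (intro divide_strict_left_mono mult_pos_pos) auto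
qed

lemma interp_exponent_antimono:
  assumes "1 < p" "0 \<le> r" "r \<le> s"
  shows "interp_exponent p s \<le> interp_exponent p r"
  using assms interp_exponent_strict_antimono[of p r s] by (cases "r = s") auto

lemma interp_exponent_ge_1:
  assumes "1 < p" "0 \<le> s" "s \<le> 1"
  shows "1 \<le> interp_exponent p s"
  using interp_exponent_antimono[of p s 1] interp_exponent_1[of p] assms by simp

lemma interp_exponent_gt_1:
  assumes "1 < p" "0 \<le> s" "s < 1"
  shows "1 < interp_exponent p s"
  using interp_exponent_strict_antimono[of p s 1] interp_exponent_1[of p] assms by simp

lemma interp_exponent_ratio:
  assumes "1 < p" "0 \<le> r" "0 \<le> s"
  shows "interp_exponent p s / interp_exponent p r = (r + 1 / (p - 1)) / (1 / (p - 1) + s)"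
proof -
  have "0 < 1 + r * (p - 1)" "0 < 1 + s * (p - 1)"
    using assms by (simp_all add: add_pos_nonneg)
  moreover have "r + 1 / (p - 1) = (1 + r * (p - 1)) / (p - 1)"
    and "1 / (p - 1) + s = (1 + s * (p - 1)) / (p - 1)"
    using assms by (simp_all add: field_simps)
  ultimately show ?thesis
    using assms by (simp add: interp_exponent_def)
qed

lemma interp_exponent_scaling:
  assumes "1 < p" "0 \<le> s"
  shows "(1 / (p - 1) + 1) / interp_exponent p s = 1 / (p - 1) + s"
proof -
  have "0 < 1 + s * (p - 1)"
    using assms by (simp add: add_pos_nonneg)
  with assms show ?thesis
    by (simp add: interp_exponent_def field_simps)
qed

lemma interp_exponent_interpolation:
  fixes p r s c :: real
  assumes p: "1 < p" and w_pos: "\<And>n. 0 < w n" and c: "0 < c" "\<And>n. c \<le> w n"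
    and r: "0 \<le> r" "r < s" and s: "s \<le> 1" and x: "x \<in> lpw_space (interp_exponent p s) w"
  shows "lpw_norm (interp_exponent p r) w x
    \<le> lpw_norm (interp_exponent p s) w x powr ((r + 1 / (p - 1)) / (1 / (p - 1) + s))
      * linfw_norm w x powr ((s - r) / (1 / (p - 1) + s))"
proof -
  define qs qr where "qs = interp_exponent p s" and "qr = interp_exponent p r"
  have qs: "0 < qs"
    using interp_exponent_ge_1[OF p, of s] r s by (simp add: qs_def)
  have less: "qs < qr"
    using interp_exponent_strict_antimono[OF p r] by (simp add: qs_def qr_def)
  have x_inf: "x \<in> linfw_space w"
    using lpw_le_linfw(1)[OF w_pos c qs] x by (simp add: qs_def)
  have ratio: "qs / qr = (r + 1 / (p - 1)) / (1 / (p - 1) + s)"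
    using interp_exponent_ratio[OF p r(1), of s] r by (simp add: qs_def qr_def)
  have "0 < 1 / (p - 1) + s"
    using p r by (simp add: add_pos_nonneg)
  then have "1 - qs / qr = (s - r) / (1 / (p - 1) + s)"
    unfolding ratio by (simp add: field_simps)
  with lpw_interpolation(2)[OF w_pos qs less _ linfw_norm_upper[OF x_inf]] x ratio show ?thesis
    by (simp add: qs_def qr_def mult.commute)
qed

section \<open>The operators P_t\<close>

lemma linear_decrease_bound_at_0:
  fixes f :: "real \<Rightarrow> real" and D B :: real
  assumes f': "(f has_real_derivative D) (at 0 within {0..})"
    and bounded: "\<And>u. 0 \<le> u \<Longrightarrow> f 0 - f u \<le> B"
  shows "\<exists>K>0. \<forall>u\<ge>0. f 0 - f u \<le> K * u"
proof -
  have "((\<lambda>u. (f u - f 0) / u) \<longlongrightarrow> D) (at 0 within {0..})"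
    using f' by (simp add: has_field_derivative_iff)
  then have "\<forall>\<^sub>F u in at 0 within {0..}. D - 1 < (f u - f 0) / u"
    by (rule order_tendstoD) simp
  then obtain d :: real where d: "0 < d"
    and near: "\<And>u. 0 < u \<Longrightarrow> u < d \<Longrightarrow> D - 1 < (f u - f 0) / u"
    by (auto simp: eventually_at dist_real_def)
  define K where "K = max (1 + \<bar>D\<bar>) (B / d)"
  have "f 0 - f u \<le> K * u" if u: "0 \<le> u" for u
  proof (cases "u < d")
    case True
    show ?thesis
    proof (cases "u = 0")
      case False
      with u True near[of u] have "f 0 - f u < (1 - D) * u"
        by (simp add: field_simps)
      also have "\<dots> \<le> K * u"
        using u by (intro mult_right_mono) (auto simp: K_def)
      finally show ?thesis by simp
    qed simp
  next
    case False
    then have "B \<le> B / d * u"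
      using d bounded[of 0] by (simp add: field_simps mult_left_mono)
    also have "\<dots> \<le> K * u"
      using u by (intro mult_right_mono) (auto simp: K_def)
    finally show ?thesis
      using bounded[OF u] by simp
  qed
  moreover have "0 < K"
    by (simp add: K_def less_max_iff_disj add_pos_nonneg)
  ultimately show ?thesis by blast
qed

lemma multiplier_family_approximation_bounds:
  fixes w :: "nat \<Rightarrow> real" and f :: "real \<Rightarrow> real" and p s K Cw :: real and T :: "real set"
  defines "e \<equiv> 1 / (p - 1) + 1" and "q \<equiv> interp_exponent p s"
  defines "P \<equiv> \<lambda>t x n. f (t powr e * w n) * x n"
  assumes w_pos: "\<And>n. 0 < w n" and p: "1 < p" and s: "0 < s" "s < 1"
    and f_unit: "\<And>u. 0 \<le> u \<Longrightarrow> 0 \<le> f u \<and> f u \<le> 1"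
    and K: "0 \<le> K" "\<And>u. 0 \<le> u \<Longrightarrow> 1 - f u \<le> K * u" and Cw: "0 < Cw"
    and sum_bound: "\<And>t. t \<in> T \<Longrightarrow> 0 < t \<and> summable (\<lambda>n. w n * f (t powr e * w n))
                                  \<and> (\<Sum>n. w n * f (t powr e * w n)) \<le> Cw / t powr e"
  shows "\<exists>C. (SUP t\<in>T. op_norm (lpw_space q w) (lpw_norm q w) (lpw_norm q w) (P t)) + 1 \<le> ereal C
    \<and> (\<forall>t\<in>T. (\<forall>x\<in>lpw_space q w. (\<lambda>n. P t x n - x n) \<in> linfw_space w \<and> P t x \<in> lpw_space 1 w)
      \<and> op_norm (lpw_space q w) (lpw_norm q w) (linfw_norm w) (\<lambda>x n. P t x n - x n)
          \<le> ereal (C * t powr (1 / (p - 1) + s))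
      \<and> op_norm (lpw_space q w) (lpw_norm q w) (lpw_norm 1 w) (P t) \<le> ereal (C * t powr (s - 1)))"
proof -
  have q: "1 < q"
    using interp_exponent_gt_1[OF p] s by (simp add: q_def)
  have e_q: "e / q = 1 / (p - 1) + s"
    using interp_exponent_scaling[OF p] s by (simp add: e_def q_def)
  have f_unit': "0 \<le> f (t powr e * w n) \<and> f (t powr e * w n) \<le> 1" for t n
    using f_unit w_pos[of n] by simp
  define C where "C = max 2 (max (K powr (1 / q)) (2 * Cw powr (1 - 1 / q)))"
  have "(SUP t\<in>T. op_norm (lpw_space q w) (lpw_norm q w) (lpw_norm q w) (P t)) \<le> 1"
    unfolding P_def using q f_unit'
    by (intro lpw_multiplier_family_op_norm_le_1) (auto simp: abs_le_iff)
  then have "(SUP t\<in>T. op_norm (lpw_space q w) (lpw_norm q w) (lpw_norm q w) (P t)) + 1 \<le> 1 + 1"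
    by (rule add_right_mono)
  also have "(1 :: ereal) + 1 \<le> ereal C"
    by (simp add: C_def one_ereal_def)
  finally have "(SUP t\<in>T. op_norm (lpw_space q w) (lpw_norm q w) (lpw_norm q w) (P t)) + 1 \<le> ereal C" .
  moreover have "(\<forall>x\<in>lpw_space q w. (\<lambda>n. P t x n - x n) \<in> linfw_space w \<and> P t x \<in> lpw_space 1 w)
      \<and> op_norm (lpw_space q w) (lpw_norm q w) (linfw_norm w) (\<lambda>x n. P t x n - x n)
          \<le> ereal (C * t powr (1 / (p - 1) + s))
      \<and> op_norm (lpw_space q w) (lpw_norm q w) (lpw_norm 1 w) (P t) \<le> ereal (C * t powr (s - 1))"
    if "t \<in> T" for t
  proof -
    from sum_bound[OF that] have t: "0 < t" and m_sum: "summable (\<lambda>n. w n * f (t powr e * w n))"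
      "(\<Sum>n. w n * f (t powr e * w n)) \<le> Cw / t powr e" by auto
    have defect: "1 - f (t powr e * w n) \<le> (K * t powr e) * w n" for n
      using K(2)[of "t powr e * w n"] w_pos[of n] by (simp add: mult.assoc)
    note bounds = lpw_multiplier_approximation_bounds[where m = "\<lambda>n. f (t powr e * w n)",
        OF w_pos q _ _ defect _ m_sum]
    have "(K * t powr e) powr (1 / q) = K powr (1 / q) * t powr (1 / (p - 1) + s)"
      using K(1) by (simp add: powr_mult powr_powr flip: e_q)
    also have "\<dots> \<le> C * t powr (1 / (p - 1) + s)"
      by (intro mult_right_mono) (auto simp: C_def)
    finally have linfw: "(K * t powr e) powr (1 / q) \<le> C * t powr (1 / (p - 1) + s)" .
    have "e * (1 - 1 / q) = 1 - s"
      using e_q q by (simp add: e_def right_diff_distrib)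
    moreover have "t powr (s - 1) = 1 / t powr (1 - s)"
      using powr_minus_divide[of t "1 - s"] by simp
    ultimately have
      "2 * (Cw / t powr e) powr (1 - 1 / q) = 2 * Cw powr (1 - 1 / q) * t powr (s - 1)"
      using Cw t by (simp add: powr_divide powr_powr)
    also have "\<dots> \<le> C * t powr (s - 1)"
      by (intro mult_right_mono) (auto simp: C_def)
    finally have l1: "2 * (Cw / t powr e) powr (1 - 1 / q) \<le> C * t powr (s - 1)" .
    show ?thesis
      unfolding P_def
      using bounds(1) order_trans[OF bounds(2) ereal_less_eq(3)[THEN iffD2, OF linfw]]
        order_trans[OF bounds(3) ereal_less_eq(3)[THEN iffD2, OF l1]] f_unit' K(1) t Cw
      by auto
  qed
  ultimately show ?thesis by blast
qed

theorem proposition1: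
  fixes p :: real and w :: "nat \<Rightarrow> real" and f :: "real \<Rightarrow> real"
    and \<tau>0 Cw :: real
  assumes p: "1 < p"
    and w_pos: "\<And>n. 0 < w n"
    and w_mono: "\<And>n1 n2. n1 < n2 \<Longrightarrow> w n1 \<le> w n2"
    and w_lim: "filterlim w at_top sequentially"
    and f_C1: "C1_nonneg_halfline f"
    and f_nonneg: "\<And>x. 0 \<le> x \<Longrightarrow> 0 \<le> f x"
    and f_decr: "\<And>x y. 0 \<le> x \<Longrightarrow> x \<le> y \<Longrightarrow> f y \<le> f x"
    and f0: "f 0 = 1"
    and \<tau>0: "0 < \<tau>0" and Cw: "0 < Cw"
    and sum_bound: "\<And>\<tau>. \<tau> \<in> {0<..\<tau>0} \<Longrightarrow>
          summable (\<lambda>n. w n * f (\<tau> * w n)) \<and> (\<Sum>n. w n * f (\<tau> * w n)) \<le> Cw / \<tau>"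
  defines "a \<equiv> 1 / (p - 1)"
    and "ps \<equiv> (\<lambda>s::real. p / (1 + s * (p - 1)))"
    and "t0 \<equiv> \<tau>0 powr (1 / (1 + 1 / (p - 1)))"
    and "P \<equiv> (\<lambda>(t::real) (x::nat \<Rightarrow> real) (n::nat). f (t powr (1 / (p - 1) + 1) * w n) * x n)"
  shows
    "(cont_embed (lpw_space 1 w) (lpw_norm 1 w) (lpw_space p w) (lpw_norm p w)
     \<and> cont_embed (lpw_space p w) (lpw_norm p w) (linfw_space w) (linfw_norm w))
   \<and> (lpw_space (ps 0) w = lpw_space p w \<and> lpw_norm (ps 0) w = lpw_norm p w
     \<and> lpw_space (ps 1) w = lpw_space 1 w \<and> lpw_norm (ps 1) w = lpw_norm 1 w
     \<and> (\<forall>s t. 0 \<le> t \<and> t \<le> s \<and> s \<le> 1 \<longrightarrow>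
          cont_embed (lpw_space (ps s) w) (lpw_norm (ps s) w) (lpw_space (ps t) w) (lpw_norm (ps t) w)))
   \<and> (\<forall>s\<in>{0<..1}. \<forall>r\<in>{0..<s}. \<exists>L>0. \<forall>x\<in>lpw_space (ps s) w.
        lpw_norm (ps r) w x \<le> L * lpw_norm (ps s) w x powr ((r + a) / (a + s))
                                  * linfw_norm w x powr ((s - r) / (a + s)))
   \<and> (\<forall>s\<in>{0..1}.
        (\<forall>t\<in>{0<..t0}. \<forall>x\<in>lpw_space (ps s) w. P t x \<in> lpw_space (ps s) w)
      \<and> (SUP t\<in>{0<..t0}. op_norm (lpw_space (ps s) w) (lpw_norm (ps s) w) (lpw_norm (ps s) w) (P t)) < \<infinity>)
   \<and> (\<forall>x\<in>lpw_space p w. \<forall>t'\<in>{0<..t0}.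
        ((\<lambda>t. lpw_norm p w (\<lambda>n. P t x n - P t' x n)) \<longlongrightarrow> 0) (at t' within {0<..t0}))
   \<and> (\<forall>s\<in>{0<..<1}. \<exists>CProj::real.
        ereal CProj \<ge> (SUP t\<in>{0<..t0}. op_norm (lpw_space (ps s) w) (lpw_norm (ps s) w) (lpw_norm (ps s) w) (P t)) + 1
      \<and> (\<forall>t\<in>{0<..t0}.
           (\<forall>x\<in>lpw_space (ps s) w. (\<lambda>n. P t x n - x n) \<in> linfw_space w \<and> P t x \<in> lpw_space 1 w)
         \<and> op_norm (lpw_space (ps s) w) (lpw_norm (ps s) w) (linfw_norm w) (\<lambda>x n. P t x n - x n)
              \<le> ereal (CProj * t powr (a + s))
         \<and> op_norm (lpw_space (ps s) w) (lpw_norm (ps s) w) (lpw_norm 1 w) (P t)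
              \<le> ereal (CProj * t powr (s - 1))))"
proof -
  have w_lower: "w 0 \<le> w n" for n
    using w_mono[of 0 n] by (cases n) auto
  have f_unit: "0 \<le> f u \<and> f u \<le> 1" if "0 \<le> u" for u
    using f_nonneg[OF that] f_decr[OF _ that] f0 by auto
  obtain f' where f': "\<And>u. 0 \<le> u \<Longrightarrow> (f has_real_derivative f' u) (at u within {0..})"
    using f_C1 unfolding C1_nonneg_halfline_def by blast
  then have f_cont: "continuous_on {0..} f"
    by (auto simp: continuous_on_eq_continuous_within intro: DERIV_continuous)
  obtain K where K: "0 < K" "\<And>u. 0 \<le> u \<Longrightarrow> 1 - f u \<le> K * u"
    using linear_decrease_bound_at_0[OF f'[of 0], of 1] f_unit f0 by auto
  have ps: "ps = interp_exponent p"
    by (simp add: ps_def interp_exponent_def fun_eq_iff)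
  have t0: "t0 powr (1 / (p - 1) + 1) = \<tau>0"
    using p \<tau>0 by (simp add: t0_def powr_powr field_simps)
  have family_sum_bound: "0 < t \<and> summable (\<lambda>n. w n * f (t powr (1 / (p - 1) + 1) * w n))
      \<and> (\<Sum>n. w n * f (t powr (1 / (p - 1) + 1) * w n)) \<le> Cw / t powr (1 / (p - 1) + 1)"
    if "t \<in> {0<..t0}" for t
  proof -
    have "t powr (1 / (p - 1) + 1) \<le> \<tau>0"
      using that p by (auto simp flip: t0 intro!: powr_mono2)
    with that sum_bound show ?thesis by simp
  qed
  have family_unit: "\<bar>f (t powr (1 / (p - 1) + 1) * w n)\<bar> \<le> 1" for t n
    using f_unit w_pos[of n] by simp
  have family_cont: "continuous_on {0<..t0} (\<lambda>t. f (t powr (1 / (p - 1) + 1) * w n))" for n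
    by (rule continuous_on_compose2[OF f_cont])
      (use w_pos[of n] in \<open>auto intro!: continuous_intros\<close>)
  let ?m = "\<lambda>t n. f (t powr (1 / (p - 1) + 1) * w n)"
  show ?thesis
    unfolding ps P_def a_def
    apply (intro conjI ballI allI impI)
    subgoal
      using p by (intro cont_embed_lpw_lpw[OF w_pos w_pos w_lower]) auto
    subgoal
      using p by (intro cont_embed_lpw_linfw[OF w_pos w_pos w_lower]) auto
    subgoal by simp
    subgoal by simp
    subgoal using p by (simp add: interp_exponent_1)
    subgoal using p by (simp add: interp_exponent_1)
    subgoal for s t
      using interp_exponent_ge_1[OF p, of s] interp_exponent_antimono[OF p, of t s]
      by (intro cont_embed_lpw_lpw[OF w_pos w_pos w_lower]) auto
    subgoal for s r
      using interp_exponent_interpolation[OF p w_pos w_pos w_lower, of r s]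
      by (intro exI[of _ 1]) auto
    subgoal for s t x
      using interp_exponent_ge_1[OF p, of s] family_unit
      by (intro lpw_multiplier_contraction(1)) auto
    subgoal for s
      using interp_exponent_ge_1[OF p, of s]
      by (intro le_less_trans[OF lpw_multiplier_family_op_norm_le_1[where m = ?m, OF _ family_unit]])
        auto
    subgoal for x t'
      using p
      by (intro lpw_multiplier_family_continuous[where m = ?m, OF _ _ family_unit family_cont]) auto
    subgoal for s
      using multiplier_family_approximation_bounds[where T = "{0<..t0}",
          OF w_pos p _ _ f_unit less_imp_le[OF K(1)] K(2) Cw family_sum_bound]
      by auto
    done
qed

end
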